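(* Let $t$ be a normal $\lambda$-term, $v$ a $\lambda$-term, and $\alpha,x$ variables with $x\in Fv(t)$, and let $x_1,\dots,x_n$ ($n\ge 0$) be variables distinct from $\alpha$. If $t[\lambda x_1\dots\lambda x_n\alpha/x]\rightarrow_\beta v$, then $\alpha\in Fv(v)$.
   Context: $\lambda$-terms are those of the untyped $\lambda$-calculus; $Fv(t)$ is the set of free variables of $t$; $t[u/x]$ is capture-avoiding substitution; $\rightarrow_\beta$ denotes $\beta$-reduction in zero or more steps; a term is normal if it contains no $\beta$-redex. *)

theory Defs
  imports Main
begin

text \<open>Untyped lambda-terms in de Bruijn notation (as in HOL/Proofs/Lambda).
  A free variable is a "loose" index; free variable number i occurring under
  k binders is represented by Var (i + k).\<close>

datatype dB =
    Var nat
  | App dB dB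
  | Abs dB

primrec lift :: "dB \<Rightarrow> nat \<Rightarrow> dB" where
  "lift (Var i) k = (if i < k then Var i else Var (Suc i))"
| "lift (App s t) k = App (lift s k) (lift t k)"
| "lift (Abs s) k = Abs (lift s (Suc k))"

primrec subst :: "dB \<Rightarrow> dB \<Rightarrow> nat \<Rightarrow> dB" where
  "subst (Var i) s k = (if k < i then Var (i - 1) else if i = k then s else Var i)"
| "subst (App t u) s k = App (subst t s k) (subst u s k)"
| "subst (Abs t) s k = Abs (subst t (lift s 0) (Suc k))"

primrec fsubst :: "dB \<Rightarrow> dB \<Rightarrow> nat \<Rightarrow> dB" where
  "fsubst (Var i) u x = (if i = x then u else Var i)"
| "fsubst (App s t) u x = App (fsubst s u x) (fsubst t u x)"
| "fsubst (Abs s) u x = Abs (fsubst s (lift u 0) (Suc x))"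

primrec Fv :: "dB \<Rightarrow> nat set" where
  "Fv (Var i) = {i}"
| "Fv (App s t) = Fv s \<union> Fv t"
| "Fv (Abs s) = {i. Suc i \<in> Fv s}"

inductive beta :: "dB \<Rightarrow> dB \<Rightarrow> bool" (infixl "\<rightarrow>\<^sub>\<beta>" 50) where
  redex: "App (Abs s) t \<rightarrow>\<^sub>\<beta> subst s t 0"
| appL: "s \<rightarrow>\<^sub>\<beta> t \<Longrightarrow> App s u \<rightarrow>\<^sub>\<beta> App t u"
| appR: "s \<rightarrow>\<^sub>\<beta> t \<Longrightarrow> App u s \<rightarrow>\<^sub>\<beta> App u t"
| abs: "s \<rightarrow>\<^sub>\<beta> t \<Longrightarrow> Abs s \<rightarrow>\<^sub>\<beta> Abs t"

abbreviation beta_reds :: "dB \<Rightarrow> dB \<Rightarrow> bool" (infixl "\<rightarrow>\<^sub>\<beta>\<^sup>*" 50) where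
  "s \<rightarrow>\<^sub>\<beta>\<^sup>* t \<equiv> beta\<^sup>*\<^sup>* s t"

primrec has_redex :: "dB \<Rightarrow> bool" where
  "has_redex (Var i) = False"
| "has_redex (App s t) = ((\<exists>b. s = Abs b) \<or> has_redex s \<or> has_redex t)"
| "has_redex (Abs s) = has_redex s"

definition normal :: "dB \<Rightarrow> bool" where
  "normal t \<longleftrightarrow> \<not> has_redex t"

text \<open>The term \<lambda>x1...\<lambda>xn.\<alpha> with the x_i distinct from \<alpha> (so \<alpha> is free).\<close>
definition lams_var :: "nat \<Rightarrow> nat \<Rightarrow> dB" where
  "lams_var n \<alpha> = (Abs ^^ n) (Var (\<alpha> + n))"

end

theory Submission
  imports Defs
begin

text \<open>After the substitution, every occurrence of \<alpha> that matters sits at the head of an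
  application spine headed by some \<open>\<lambda>x\<^sub>1\<dots>\<lambda>x\<^sub>k.\<alpha>\<close>, under a binder, or inside an application
  spine headed by a variable. Since t is normal, these are the only shapes produced, and each is
  stable under \<beta>: contracting \<open>(\<lambda>x\<^sub>1\<dots>\<lambda>x\<^sub>k.\<alpha>) w\<close> gives \<open>\<lambda>x\<^sub>2\<dots>\<lambda>x\<^sub>k.\<alpha>\<close>, and a spine headed by a
  variable never becomes a redex. So \<alpha> stays free in every reduct.\<close>

lemma lams_var_0 [simp]: "lams_var 0 a = Var a"
  by (simp add: lams_var_def)

lemma lams_var_Suc [simp]: "lams_var (Suc m) a = Abs (lams_var m (Suc a))"
  by (simp add: lams_var_def funpow_swap1)

lemma lams_var_eq_Abs: "lams_var m a = Abs b \<longleftrightarrow> (\<exists>k. m = Suc k \<and> b = lams_var k (Suc a))"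
  by (cases m) auto

lemma lift_lams_var: "k \<le> a \<Longrightarrow> lift (lams_var m a) k = lams_var m (Suc a)"
  by (induction m arbitrary: a k) simp_all

lemma subst_lams_var: "k \<le> a \<Longrightarrow> subst (lams_var m (Suc a)) w k = lams_var m a"
  by (induction m arbitrary: a k w) simp_all

lemma Fv_lams_var: "a \<in> Fv (lams_var m a)"
  by (induction m arbitrary: a) simp_all

lemma lams_var_not_beta: "\<not> lams_var m a \<rightarrow>\<^sub>\<beta> s"
  by (induction m arbitrary: a s) (auto elim: beta.cases)

inductive lams_head :: "nat \<Rightarrow> dB \<Rightarrow> bool" where
  lams_head_lams_var: "lams_head a (lams_var m a)"
| lams_head_App: "lams_head a s \<Longrightarrow> lams_head a (App s w)"

inductive var_head :: "dB \<Rightarrow> bool" where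
  var_head_Var: "var_head (Var i)"
| var_head_App: "var_head s \<Longrightarrow> var_head (App s w)"

inductive persistent :: "nat \<Rightarrow> dB \<Rightarrow> bool" where
  persistent_lams_head: "lams_head a s \<Longrightarrow> persistent a s"
| persistent_Abs: "persistent (Suc a) s \<Longrightarrow> persistent a (Abs s)"
| persistent_AppL: "var_head s \<Longrightarrow> persistent a s \<Longrightarrow> persistent a (App s w)"
| persistent_AppR: "var_head s \<Longrightarrow> persistent a w \<Longrightarrow> persistent a (App s w)"

lemma var_head_not_Abs: "var_head s \<Longrightarrow> s \<noteq> Abs b"
  by (induction rule: var_head.induct) auto

lemma var_head_beta: "var_head s \<Longrightarrow> s \<rightarrow>\<^sub>\<beta> s' \<Longrightarrow> var_head s'"
proof (induction arbitrary: s' rule: var_head.induct)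
  case var_head_Var
  then show ?case by (auto elim: beta.cases)
next
  case (var_head_App s w)
  from var_head_App.prems show ?case
    by (cases rule: beta.cases)
      (use var_head_App var_head_not_Abs in \<open>auto intro: var_head.intros\<close>)
qed

lemma lams_head_beta: "lams_head a s \<Longrightarrow> s \<rightarrow>\<^sub>\<beta> s' \<Longrightarrow> lams_head a s'"
proof (induction arbitrary: s' rule: lams_head.induct)
  case lams_head_lams_var
  then show ?case using lams_var_not_beta by blast
next
  case (lams_head_App a s w)
  from lams_head_App.prems show ?case
  proof (cases rule: beta.cases)
    case (redex b)
    from \<open>lams_head a s\<close> \<open>s = Abs b\<close> obtain m where "b = lams_var m (Suc a)"
      by (cases rule: lams_head.cases) (auto simp: lams_var_eq_Abs)
    then show ?thesis
      using redex subst_lams_var[of 0 a m w] lams_head_lams_var by simp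
  qed (use lams_head_App in \<open>auto intro: lams_head.intros\<close>)
qed

lemma persistent_beta: "persistent a s \<Longrightarrow> s \<rightarrow>\<^sub>\<beta> s' \<Longrightarrow> persistent a s'"
proof (induction arbitrary: s' rule: persistent.induct)
  case persistent_lams_head
  then show ?case using lams_head_beta persistent.persistent_lams_head by blast
next
  case persistent_Abs
  from persistent_Abs.prems show ?case
    by (cases rule: beta.cases) (use persistent_Abs in \<open>auto intro: persistent.intros\<close>)
next
  case persistent_AppL
  from persistent_AppL.prems show ?case
    by (cases rule: beta.cases)
      (use persistent_AppL var_head_not_Abs var_head_beta in \<open>auto intro: persistent.intros\<close>)
next
  case persistent_AppR
  from persistent_AppR.prems show ?case
    by (cases rule: beta.cases)
      (use persistent_AppR var_head_not_Abs var_head_beta in \<open>auto intro: persistent.intros\<close>)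
qed

lemma persistent_beta_reds: "s \<rightarrow>\<^sub>\<beta>\<^sup>* s' \<Longrightarrow> persistent a s \<Longrightarrow> persistent a s'"
  by (induction rule: rtranclp_induct) (auto intro: persistent_beta)

lemma lams_head_Fv: "lams_head a s \<Longrightarrow> a \<in> Fv s"
  by (induction rule: lams_head.induct) (auto simp: Fv_lams_var)

lemma persistent_Fv: "persistent a s \<Longrightarrow> a \<in> Fv s"
  by (induction rule: persistent.induct) (auto simp: lams_head_Fv)

lemma fsubst_lams_var_spine:
  assumes "normal t" and "\<forall>b. t \<noteq> Abs b"
  shows "lams_head a (fsubst t (lams_var n a) x) \<or> var_head (fsubst t (lams_var n a) x)"
  using assms
proof (induction t)
  case (App s u)
  then have "lams_head a (fsubst s (lams_var n a) x) \<or> var_head (fsubst s (lams_var n a) x)"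
    by (auto simp: normal_def)
  then show ?case by (auto intro: lams_head.intros var_head.intros)
qed (auto intro: lams_head.intros var_head.intros)

lemma persistent_fsubst_lams_var:
  assumes "normal t" and "x \<in> Fv t"
  shows "persistent a (fsubst t (lams_var n a) x)"
  using assms
proof (induction t arbitrary: x a)
  case Var
  then show ?case by (auto intro: lams_head.intros persistent.intros)
next
  case (Abs s)
  then have "persistent (Suc a) (fsubst s (lams_var n (Suc a)) (Suc x))"
    by (auto simp: normal_def)
  then show ?case by (simp add: lift_lams_var persistent_Abs)
next
  case (App s u)
  have normal_s: "normal s" and normal_u: "normal u" and s_not_Abs: "\<forall>b. s \<noteq> Abs b"
    using App.prems(1) by (auto simp: normal_def)
  let ?s = "fsubst s (lams_var n a) x"
  consider "lams_head a ?s" | "var_head ?s"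
    using fsubst_lams_var_spine[OF normal_s s_not_Abs] by blast
  then show ?case
  proof cases
    case 1
    then show ?thesis by (auto intro: lams_head.intros persistent.intros)
  next
    case 2
    with App normal_s normal_u show ?thesis by (auto intro: persistent.intros)
  qed
qed

theorem lemma2p1p2:
  fixes t v :: dB and \<alpha> x n :: nat
  assumes "normal t"
    and "x \<in> Fv t"
    and "fsubst t (lams_var n \<alpha>) x \<rightarrow>\<^sub>\<beta>\<^sup>* v"
  shows "\<alpha> \<in> Fv v"
proof -
  have "persistent \<alpha> (fsubst t (lams_var n \<alpha>) x)"
    using persistent_fsubst_lams_var[OF assms(1,2)] .
  then have "persistent \<alpha> v"
    by (rule persistent_beta_reds[OF assms(3)])
  then show ?thesis
    by (rule persistent_Fv)
qed

end
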